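(* For $k\ge0$ let $(\mathcal{Y}Sym)^k$ be the span of $\{M_t: t\in\mathcal{Y}^k\}$. Then the decomposition $\mathcal{Y}Sym=\bigoplus_{k\ge0}(\mathcal{Y}Sym)^k$ is a coalgebra grading, and with this grading $\mathcal{Y}Sym$ is a cofree graded coalgebra (on $V=(\mathcal{Y}Sym)^1$).
   Context: $\mathcal{Y}_n$ is the set of rooted planar binary trees with $n$ internal nodes; $\mathcal{Y}_0=\{|\}$. $s\vee t$ denotes the tree with left subtree $s$ and right subtree $t$ at the root; each $t\ne|$ is uniquely $t_l\vee t_r$. The Tamari order on $\mathcal{Y}_n$ is generated by replacing a subtree $(a\vee b)\vee c$ by the larger $a\vee(b\vee c)$. $s\backslash t$: $|\backslash t=t$, $s\backslash t=s_l\vee(s_r\backslash t)$. A tree $t\neq|$ is progressive if $t_r=|$; every $t\ne|$ has a unique decomposition $t=t_1\backslash t_2\backslash\cdots\backslash t_k$ into progressive trees. $\mathcal{Y}^0=\mathcal{Y}_0$, and for $k\ge1$, $\mathcal{Y}^k$ is the set of trees (of all sizes) with exactly $k$ progressive components. $\mathcal{Y}Sym$ is the graded Hopf algebra over $\mathbb{Q}$ with basis $\{F_t\}$; leaves of $t\in\mathcal{Y}_n$ are numbered $0,\dots,n$; splitting $t$ at leaf $i$, $t\to(t_0,t_1)$, is defined recursively by: $|\to(|,|)$; for $t=t_l\vee t_r$, if leaf $i$ is in $t_l$ and $t_l\to(a,b)$ there then $t\to(a,b\vee t_r)$, if leaf $i$ is in $t_r$ and $t_r\to(c,d)$ there then $t\to(t_l\vee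 c,d)$. Coproduct: $\Delta(F_t)=\sum_{i=0}^nF_{t_0}\otimes F_{t_1}$. Monomial basis: $M_t=\sum_{t\le s}\mu_{\mathcal{Y}_n}(t,s)F_s$ (Möbius function of the Tamari order). A coalgebra grading is a decomposition $C=\bigoplus_k C^k$ with $\Delta(C^k)\subseteq\sum_{i+j=k}C^i\otimes C^j$ and counit vanishing on $C^k$, $k\ge1$. The cofree graded coalgebra on a vector space $V$ is $Q(V)=\bigoplus_{k\ge0}V^{\otimes k}$ with deconcatenation coproduct $\Delta(v_1\otimes\cdots\otimes v_k)=\sum_{i=0}^k(v_1\otimes\cdots\otimes v_i)\otimes(v_{i+1}\otimes\cdots\otimes v_k)$; a graded coalgebra is cofree if it is isomorphic as a graded coalgebra to some $Q(V)$. *)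

theory Defs
  imports Complex_Main
begin

text \<open>Leaf is the tree with no internal node; Node s t is s \<or> t.\<close>
datatype tree = Leaf | Node tree tree

fun inodes :: "tree \<Rightarrow> nat" where
  "inodes Leaf = 0"
| "inodes (Node l r) = inodes l + inodes r + 1"

definition Y :: "nat \<Rightarrow> tree set" where
  "Y n = {t. inodes t = n}"

inductive tamari_step :: "tree \<Rightarrow> tree \<Rightarrow> bool" where
  rot: "tamari_step (Node (Node a b) c) (Node a (Node b c))"
| left: "tamari_step l l' \<Longrightarrow> tamari_step (Node l r) (Node l' r)"
| right: "tamari_step r r' \<Longrightarrow> tamari_step (Node l r) (Node l r')"

definition tamari_le :: "tree \<Rightarrow> tree \<Rightarrow> bool" where
  "tamari_le = tamari_step\<^sup>*\<^sup>*"

text \<open>Moebius function of a finite poset (A, le), via its defining recursion;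
  it is set to 0 outside A so that it is uniquely determined.\<close>
definition mobius_on :: "'a set \<Rightarrow> ('a \<Rightarrow> 'a \<Rightarrow> bool) \<Rightarrow> 'a \<Rightarrow> 'a \<Rightarrow> int" where
  "mobius_on A le = (THE f.
     (\<forall>x\<in>A. \<forall>y\<in>A. f x y =
        (if x = y then 1
         else if le x y then - (\<Sum>z\<in>{z\<in>A. le x z \<and> le z y \<and> z \<noteq> y}. f x z)
         else 0)) \<and>
     (\<forall>x y. (x \<notin> A \<or> y \<notin> A) \<longrightarrow> f x y = 0))"

fun under :: "tree \<Rightarrow> tree \<Rightarrow> tree" where
  "under Leaf t = t"
| "under (Node l r) t = Node l (under r t)"

definition progressive :: "tree \<Rightarrow> bool" where
  "progressive t \<longleftrightarrow> (\<exists>l. t = Node l Leaf)"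

text \<open>Ycomp k = trees with exactly k progressive components (t = t1\t2\...\tk);
  Ycomp 0 = {Leaf}.\<close>
definition Ycomp :: "nat \<Rightarrow> tree set" where
  "Ycomp k = {t. \<exists>ts. length ts = k \<and> (\<forall>p\<in>set ts. progressive p) \<and> t = foldr under ts Leaf}"

text \<open>Splitting at leaf i (leaves numbered 0..inodes t from left to right).\<close>
fun split_at :: "tree \<Rightarrow> nat \<Rightarrow> tree \<times> tree" where
  "split_at Leaf i = (Leaf, Leaf)"
| "split_at (Node l r) i =
     (if i \<le> inodes l then (case split_at l i of (a, b) \<Rightarrow> (a, Node b r))
      else (case split_at r (i - inodes l - 1) of (c, d) \<Rightarrow> (Node l c, d)))"

text \<open>Elements of YSym are finitely supported coefficient functions in the basis F_t;
  elements of YSym \<otimes> YSym are finitely supported functions on pairs of trees.\<close>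
definition finsupp :: "('a \<Rightarrow> rat) \<Rightarrow> bool" where
  "finsupp f \<longleftrightarrow> finite {x. f x \<noteq> 0}"

definition YSym :: "(tree \<Rightarrow> rat) set" where
  "YSym = {f. finsupp f}"

definition F :: "tree \<Rightarrow> tree \<Rightarrow> rat" where
  "F t = (\<lambda>s. if s = t then 1 else 0)"

definition M :: "tree \<Rightarrow> tree \<Rightarrow> rat" where
  "M t = (\<lambda>s. of_int (mobius_on (Y (inodes t)) tamari_le t s))"

text \<open>Linear extension of Delta(F_t) = sum_{i=0}^{n} F_{t_0} \<otimes> F_{t_1}.\<close>
definition coprod :: "(tree \<Rightarrow> rat) \<Rightarrow> (tree \<times> tree \<Rightarrow> rat)" where
  "coprod f = (\<lambda>(a, b). \<Sum>t\<in>{t. f t \<noteq> 0}.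
      f t * of_nat (card {i. i \<le> inodes t \<and> split_at t i = (a, b)}))"

definition counit :: "(tree \<Rightarrow> rat) \<Rightarrow> rat" where
  "counit f = f Leaf"

definition tensor :: "('a \<Rightarrow> rat) \<Rightarrow> ('b \<Rightarrow> rat) \<Rightarrow> ('a \<times> 'b \<Rightarrow> rat)" where
  "tensor x y = (\<lambda>(a, b). x a * y b)"

definition lin_span :: "('a \<Rightarrow> rat) set \<Rightarrow> ('a \<Rightarrow> rat) set" where
  "lin_span S = {f. \<exists>A c. finite A \<and> A \<subseteq> S \<and> f = (\<lambda>x. \<Sum>v\<in>A. c v * v x)}"

definition lin_indep_on :: "'i set \<Rightarrow> ('i \<Rightarrow> 'a \<Rightarrow> rat) \<Rightarrow> bool" where
  "lin_indep_on I v \<longleftrightarrow> (\<forall>A c. finite A \<and> A \<subseteq> I \<and> (\<forall>x. (\<Sum>w\<in>A. c w * v w x) = 0)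
      \<longrightarrow> (\<forall>w\<in>A. c w = 0))"

definition grade :: "nat \<Rightarrow> (tree \<Rightarrow> rat) set" where
  "grade k = lin_span {M t | t. t \<in> Ycomp k}"

end

theory Submission
  imports Defs "HOL-Library.Function_Algebras"
begin

text \<open>Rotations strictly increase a potential, so the Tamari order is a partial order
  with finite intervals and its Moebius function \<open>\<mu>\<close> can be defined by recursion;
  \<open>M\<^sub>t = \<Sum>\<^sub>s \<mu>(t, s) F\<^sub>s\<close> and \<open>F\<^sub>t = \<Sum>\<^sub>t\<^sub>\<le>\<^sub>s M\<^sub>s\<close>.
  Splitting at leaf \<open>|a|\<close> is left adjoint to \<open>(a, b) \<mapsto> a\<backslash>b\<close>:
  \<open>s \<le> a\<backslash>b\<close> iff the two halves of \<open>s\<close> lie below \<open>a\<close> and \<open>b\<close>.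
  Moebius inversion in both tensor factors therefore turns
  \<open>\<Delta>(F\<^sub>s) = \<Sum>\<^sub>i F\<^sub>s\<^sub>0 \<otimes> F\<^sub>s\<^sub>1\<close> into
  \<open>\<Delta>(M\<^sub>t) = \<Sum> M\<^sub>a \<otimes> M\<^sub>b\<close>, summed over \<open>a\<backslash>b = t\<close>; these pairs are
  exactly the cuts of the progressive decomposition \<open>t = t\<^sub>1\<backslash>\<dots>\<backslash>t\<^sub>k\<close>.
  Hence \<open>M\<close> of \<open>t\<^sub>1\<backslash>\<dots>\<backslash>t\<^sub>k\<close> corresponds to
  \<open>M\<^bsub>t\<^sub>1\<^esub> \<otimes> \<dots> \<otimes> M\<^bsub>t\<^sub>k\<^esub>\<close> in the cofree coalgebra on the span of the
  progressive \<open>M\<^sub>t\<close>, and the grading counts tensor factors.\<close>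

fun rot_potential :: "tree \<Rightarrow> nat" where
  "rot_potential Leaf = 0"
| "rot_potential (Node l r) = rot_potential l + rot_potential r + inodes r"

lemma tamari_step_potential:
  "tamari_step s t \<Longrightarrow> rot_potential s < rot_potential t \<and> inodes s = inodes t"
  by (induction rule: tamari_step.induct) auto

lemma tamari_le_refl [simp]: "tamari_le s s"
  by (simp add: tamari_le_def)

lemma tamari_le_trans [trans]: "tamari_le s t \<Longrightarrow> tamari_le t u \<Longrightarrow> tamari_le s u"
  by (simp add: tamari_le_def)

lemma tamari_step_le: "tamari_step s t \<Longrightarrow> tamari_le s t"
  by (simp add: tamari_le_def)

lemma tamari_le_inodes: "tamari_le s t \<Longrightarrow> inodes s = inodes t"
  unfolding tamari_le_def
  by (induction rule: rtranclp_induct) (auto dest: tamari_step_potential)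

lemma tamari_le_potential_less:
  assumes "tamari_le s t" "s \<noteq> t"
  shows "rot_potential s < rot_potential t"
proof -
  have "tamari_step\<^sup>+\<^sup>+ s t"
    using assms unfolding tamari_le_def by (metis rtranclpD)
  then show ?thesis
    by (induction rule: tranclp_induct) (auto dest: tamari_step_potential)
qed

lemma tamari_le_antisym: "tamari_le s t \<Longrightarrow> tamari_le t s \<Longrightarrow> s = t"
  using tamari_le_potential_less less_asym by blast

lemma Y_0: "Y 0 = {Leaf}"
  by (auto simp: Y_def elim: inodes.elims)

lemma finite_inodes_le: "finite {t. inodes t \<le> n}"
proof (induction n)
  case 0
  then show ?case
    using Y_0 by (simp add: Y_def)
next
  case (Suc n)
  let ?S = "{t. inodes t \<le> n}"
  have "{t. inodes t \<le> Suc n} \<subseteq> insert Leaf (case_prod Node ` (?S \<times> ?S))"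
  proof
    fix t assume "t \<in> {t. inodes t \<le> Suc n}"
    then show "t \<in> insert Leaf (case_prod Node ` (?S \<times> ?S))"
      by (cases t) auto
  qed
  then show ?case
    using Suc by (meson finite_SigmaI finite_imageI finite_insert finite_subset)
qed

lemma finite_Y: "finite (Y n)"
  by (rule finite_subset[OF _ finite_inodes_le[of n]]) (auto simp: Y_def)

lemma tamari_le_Y_iff: "tamari_le s t \<Longrightarrow> s \<in> Y n \<longleftrightarrow> t \<in> Y n"
  by (simp add: Y_def tamari_le_inodes)

abbreviation tamari_interval :: "tree \<Rightarrow> tree \<Rightarrow> tree set" where
  "tamari_interval x y \<equiv> {z. tamari_le x z \<and> tamari_le z y}"

lemma finite_tamari_interval: "finite (tamari_interval x y)"
  by (rule finite_subset[OF _ finite_Y[of "inodes x"]]) (auto simp: Y_def tamari_le_inodes)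

section \<open>The Moebius function of the Tamari order\<close>

function mu :: "tree \<Rightarrow> tree \<Rightarrow> int" where
  "mu x y = (if x = y then 1 else if tamari_le x y
     then - (\<Sum>z\<in>tamari_interval x y - {y}. mu x z) else 0)"
  by auto
termination
  by (relation "measure (\<lambda>(x, y). rot_potential y)") (auto intro: tamari_le_potential_less)

text \<open>The same recursion run from the other end of the interval; it is only
  needed to show that \<^const>\<open>mu\<close> also inverts the zeta function from the right.\<close>
function mu' :: "tree \<Rightarrow> tree \<Rightarrow> int" where
  "mu' x y = (if x = y then 1 else if tamari_le x y
     then - (\<Sum>z\<in>tamari_interval x y - {x}. mu' z y) else 0)"
  by auto
termination
proof (relation "measure (\<lambda>(x, y). rot_potential y - rot_potential x)")
  fix x y z
  assume "x \<noteq> y" "tamari_le x y" "z \<in> tamari_interval x y - {x}"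
  then have "rot_potential x < rot_potential z" "rot_potential x < rot_potential y"
    using tamari_le_potential_less by auto
  then show "((z, y), x, y) \<in> measure (\<lambda>(x, y). rot_potential y - rot_potential x)"
    by simp
qed simp

declare mu.simps [simp del] mu'.simps [simp del]

lemma mu_refl [simp]: "mu x x = 1"
  by (simp add: mu.simps)

lemma mu'_refl [simp]: "mu' x x = 1"
  by (simp add: mu'.simps)

lemma mu_eq_0: "\<not> tamari_le x y \<Longrightarrow> mu x y = 0"
  by (metis tamari_le_refl mu.simps)

lemma mu'_eq_0: "\<not> tamari_le x y \<Longrightarrow> mu' x y = 0"
  by (metis tamari_le_refl mu'.simps)

lemma sum_mu_left: "(\<Sum>z\<in>tamari_interval x y. mu x z) = of_bool (x = y)"
proof (cases "tamari_le x y \<and> x \<noteq> y")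
  case True
  then have "(\<Sum>z\<in>tamari_interval x y. mu x z) = mu x y + (\<Sum>z\<in>tamari_interval x y - {y}. mu x z)"
    by (intro sum.remove finite_tamari_interval) simp
  also have "mu x y = - (\<Sum>z\<in>tamari_interval x y - {y}. mu x z)"
    using True by (subst mu.simps) simp
  finally show ?thesis
    using True by simp
next
  case False
  then have "tamari_interval x y = (if x = y then {x} else {})"
    using tamari_le_trans tamari_le_antisym by auto
  then show ?thesis
    by simp
qed

lemma sum_mu'_right: "(\<Sum>z\<in>tamari_interval x y. mu' z y) = of_bool (x = y)"
proof (cases "tamari_le x y \<and> x \<noteq> y")
  case True
  then have "(\<Sum>z\<in>tamari_interval x y. mu' z y) = mu' x y + (\<Sum>z\<in>tamari_interval x y - {x}. mu' z y)"
    by (intro sum.remove finite_tamari_interval) simp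
  also have "mu' x y = - (\<Sum>z\<in>tamari_interval x y - {x}. mu' z y)"
    using True by (subst mu'.simps) simp
  finally show ?thesis
    using True by simp
next
  case False
  then have "tamari_interval x y = (if x = y then {x} else {})"
    using tamari_le_trans tamari_le_antisym by auto
  then show ?thesis
    by simp
qed

text \<open>A left and a right inverse of the zeta function coincide: evaluate
  \<open>\<Sum>\<^sub>w\<^sub>\<le>\<^sub>z mu x w * mu' z y\<close> over the interval in both orders.\<close>
lemma mu'_eq_mu: "mu' x y = mu x y"
proof (cases "tamari_le x y")
  case True
  define U where "U = tamari_interval x y"
  have "finite U"
    by (simp add: U_def finite_tamari_interval)
  have up: "{z\<in>U. tamari_le w z} = tamari_interval w y" if "w \<in> U" for w
    using that by (auto simp: U_def intro: tamari_le_trans)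
  have down: "{w\<in>U. tamari_le w z} = tamari_interval x z" if "z \<in> U" for z
    using that by (auto simp: U_def intro: tamari_le_trans)
  let ?S = "\<Sum>w\<in>U. \<Sum>z\<in>U. if tamari_le w z then mu x w * mu' z y else 0"
  have "?S = (\<Sum>w\<in>U. mu x w * (\<Sum>z\<in>tamari_interval w y. mu' z y))"
    by (rule sum.cong) (simp_all add: up \<open>finite U\<close> sum_distrib_left flip: sum.inter_filter)
  also have "\<dots> = mu x y"
    using \<open>finite U\<close> True by (simp add: sum_mu'_right U_def)
  finally have "?S = mu x y" .
  moreover have "?S = (\<Sum>z\<in>U. (\<Sum>w\<in>tamari_interval x z. mu x w) * mu' z y)"
    by (subst sum.swap, rule sum.cong)
      (simp_all add: down \<open>finite U\<close> sum_distrib_right flip: sum.inter_filter)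
  moreover have "\<dots> = mu' x y"
    using \<open>finite U\<close> True by (simp add: sum_mu_left U_def)
  ultimately show ?thesis
    by simp
qed (simp add: mu_eq_0 mu'_eq_0)

lemma sum_mu_right: "(\<Sum>z\<in>tamari_interval x y. mu z y) = of_bool (x = y)"
  using sum_mu'_right by (simp add: mu'_eq_mu)

lemma Y_interval_eq:
  "x \<in> Y n \<Longrightarrow> {z\<in>Y n. tamari_le x z \<and> tamari_le z y \<and> z \<noteq> y} = tamari_interval x y - {y}"
  using tamari_le_Y_iff by blast

lemma mobius_on_Y: "mobius_on (Y n) tamari_le = (\<lambda>x y. if x \<in> Y n \<and> y \<in> Y n then mu x y else 0)"
  unfolding mobius_on_def
proof (rule the_equality, intro conjI ballI allI impI)
  fix x y assume x: "x \<in> Y n" and y: "y \<in> Y n"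
  have "(\<Sum>z\<in>tamari_interval x y - {y}. if z \<in> Y n then mu x z else 0)
      = (\<Sum>z\<in>tamari_interval x y - {y}. mu x z)"
    using x tamari_le_Y_iff by (intro sum.cong) auto
  then show "(if x \<in> Y n \<and> y \<in> Y n then mu x y else 0) =
      (if x = y then 1 else if tamari_le x y
       then - (\<Sum>z\<in>{z\<in>Y n. tamari_le x z \<and> tamari_le z y \<and> z \<noteq> y}. if x \<in> Y n \<and> z \<in> Y n then mu x z else 0)
       else 0)"
    using x y by (simp add: Y_interval_eq mu.simps[of x y])
next
  fix f :: "tree \<Rightarrow> tree \<Rightarrow> int"
  assume f: "(\<forall>x\<in>Y n. \<forall>y\<in>Y n. f x y =
      (if x = y then 1 else if tamari_le x y
       then - (\<Sum>z\<in>{z\<in>Y n. tamari_le x z \<and> tamari_le z y \<and> z \<noteq> y}. f x z) else 0)) \<and>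
    (\<forall>x y. x \<notin> Y n \<or> y \<notin> Y n \<longrightarrow> f x y = 0)"
  have "f x y = mu x y" if x: "x \<in> Y n" and y: "y \<in> Y n" for x y
    using y
  proof (induction y rule: measure_induct_rule[of rot_potential])
    case (less y)
    have "(\<Sum>z\<in>tamari_interval x y - {y}. f x z) = (\<Sum>z\<in>tamari_interval x y - {y}. mu x z)"
      using less x tamari_le_potential_less tamari_le_Y_iff by (intro sum.cong) auto
    then show ?case
      using f x less.prems by (simp add: Y_interval_eq mu.simps[of x y])
  qed
  then show "f = (\<lambda>x y. if x \<in> Y n \<and> y \<in> Y n then mu x y else 0)"
    using f by (auto simp: fun_eq_iff)
qed auto

lemma M_eq_mu: "M t s = of_int (mu t s)"
proof (cases "s \<in> Y (inodes t)")
  case False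
  then have "\<not> tamari_le t s"
    by (auto simp: Y_def tamari_le_inodes)
  then show ?thesis
    using False by (simp add: M_def mobius_on_Y mu_eq_0)
next
  case True
  moreover have "t \<in> Y (inodes t)"
    by (simp add: Y_def)
  ultimately show ?thesis
    by (simp add: M_def mobius_on_Y)
qed

section \<open>Splitting trees and the Galois connection\<close>

lemma under_Leaf_right [simp]: "under a Leaf = a"
  by (induction a) auto

lemma under_assoc: "under (under a b) c = under a (under b c)"
  by (induction a) auto

lemma tamari_le_Node_left: "tamari_le l l' \<Longrightarrow> tamari_le (Node l r) (Node l' r)"
  unfolding tamari_le_def
  by (induction rule: rtranclp_induct) (auto intro: rtranclp.rtrancl_into_rtrancl tamari_step.left)

lemma tamari_le_Node_right: "tamari_le r r' \<Longrightarrow> tamari_le (Node l r) (Node l r')"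
  unfolding tamari_le_def
  by (induction rule: rtranclp_induct) (auto intro: rtranclp.rtrancl_into_rtrancl tamari_step.right)

lemma tamari_le_rot: "tamari_le (Node (Node a b) c) (Node a (Node b c))"
  by (simp add: tamari_step_le tamari_step.rot)

lemma tamari_step_under_left: "tamari_step a a' \<Longrightarrow> tamari_step (under a b) (under a' b)"
  by (induction rule: tamari_step.induct) (auto intro: tamari_step.intros)

lemma tamari_le_under_left: "tamari_le a a' \<Longrightarrow> tamari_le (under a b) (under a' b)"
  unfolding tamari_le_def
  by (induction rule: rtranclp_induct) (auto intro: rtranclp.rtrancl_into_rtrancl tamari_step_under_left)

lemma tamari_le_under_right: "tamari_le b b' \<Longrightarrow> tamari_le (under a b) (under a b')"
  by (induction a) (auto intro: tamari_le_Node_right)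

lemma tamari_le_Node_under: "tamari_le (Node (under x y) r) (under x (Node y r))"
proof (induction x)
  case (Node xl xr)
  have "tamari_le (Node (Node xl (under xr y)) r) (Node xl (Node (under xr y) r))"
    by (rule tamari_le_rot)
  also have "tamari_le \<dots> (Node xl (under xr (Node y r)))"
    by (rule tamari_le_Node_right[OF Node.IH(2)])
  finally show ?case
    by simp
qed simp

lemma split_at_Node:
  "split_at (Node l r) i =
    (if i \<le> inodes l then (fst (split_at l i), Node (snd (split_at l i)) r)
     else (Node l (fst (split_at r (i - inodes l - 1))), snd (split_at r (i - inodes l - 1))))"
  by (simp add: case_prod_unfold)

declare split_at.simps(2) [simp del]

lemma inodes_fst_split_at: "inodes (fst (split_at t i)) = min i (inodes t)"
  by (induction t arbitrary: i) (auto simp: split_at_Node)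

lemma split_at_0: "split_at b 0 = (Leaf, b)"
  by (induction b) (auto simp: split_at_Node)

lemma split_at_under: "split_at (under a b) (inodes a) = (a, b)"
  by (induction a) (auto simp: split_at_0 split_at_Node)

lemma tamari_le_under_split_at: "tamari_le t (under (fst (split_at t i)) (snd (split_at t i)))"
proof (induction t arbitrary: i)
  case (Node l r)
  show ?case
  proof (cases "i \<le> inodes l")
    case True
    have "tamari_le (Node l r) (Node (under (fst (split_at l i)) (snd (split_at l i))) r)"
      by (rule tamari_le_Node_left[OF Node.IH(1)])
    then show ?thesis
      using True by (auto simp: split_at_Node intro: tamari_le_trans tamari_le_Node_under)
  qed (auto simp: split_at_Node intro: tamari_le_Node_right Node.IH(2))
qed simp

lemma tamari_step_split_at_mono:
  "tamari_step s s' \<Longrightarrow>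
    tamari_le (fst (split_at s i)) (fst (split_at s' i)) \<and>
    tamari_le (snd (split_at s i)) (snd (split_at s' i))"
proof (induction arbitrary: i rule: tamari_step.induct)
  case (rot a b c)
  then show ?case
    by (auto simp: split_at_Node tamari_le_rot)
next
  case (left l l' r)
  then show ?case
    using tamari_step_potential[OF left.hyps] tamari_step_le[OF left.hyps]
    by (auto simp: split_at_Node intro: tamari_le_Node_left)
next
  case (right r r' l)
  then show ?case
    using tamari_step_potential[OF right.hyps] tamari_step_le[OF right.hyps]
    by (auto simp: split_at_Node intro: tamari_le_Node_right)
qed

lemma tamari_le_split_at_mono:
  assumes "tamari_le s s'"
  shows "tamari_le (fst (split_at s i)) (fst (split_at s' i)) \<and>
    tamari_le (snd (split_at s i)) (snd (split_at s' i))"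
  using assms unfolding tamari_le_def
proof (induction rule: rtranclp_induct)
  case (step y z)
  then show ?case
    using tamari_step_split_at_mono[OF step(2), of i] by (auto simp: tamari_le_def)
qed simp

lemma tamari_le_under_iff:
  "tamari_le s (under a b) \<longleftrightarrow>
    tamari_le (fst (split_at s (inodes a))) a \<and> tamari_le (snd (split_at s (inodes a))) b"
proof
  assume "tamari_le s (under a b)"
  from tamari_le_split_at_mono[OF this, of "inodes a"]
  show "tamari_le (fst (split_at s (inodes a))) a \<and> tamari_le (snd (split_at s (inodes a))) b"
    by (simp add: split_at_under)
next
  assume "tamari_le (fst (split_at s (inodes a))) a \<and> tamari_le (snd (split_at s (inodes a))) b"
  then show "tamari_le s (under a b)"
    by (meson tamari_le_trans tamari_le_under_split_at tamari_le_under_left tamari_le_under_right)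
qed

fun prog_comps :: "tree \<Rightarrow> tree list" where
  "prog_comps Leaf = []"
| "prog_comps (Node l r) = Node l Leaf # prog_comps r"

abbreviation under_list :: "tree list \<Rightarrow> tree" where
  "under_list ts \<equiv> foldr under ts Leaf"

lemma under_list_prog_comps [simp]: "under_list (prog_comps t) = t"
  by (induction t) auto

lemma progressive_prog_comps: "p \<in> set (prog_comps t) \<Longrightarrow> progressive p"
  by (induction t) (auto simp: progressive_def)

lemma prog_comps_under_list: "\<forall>p\<in>set ts. progressive p \<Longrightarrow> prog_comps (under_list ts) = ts"
  by (induction ts) (auto simp: progressive_def)

lemma prog_comps_under: "prog_comps (under a b) = prog_comps a @ prog_comps b"
  by (induction a) auto

lemma under_list_append: "under_list (xs @ ys) = under (under_list xs) (under_list ys)"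
  by (induction xs) (auto simp: under_assoc)

lemma Ycomp_eq: "Ycomp k = {t. length (prog_comps t) = k}"
  unfolding Ycomp_def
  by (auto simp: prog_comps_under_list intro!: exI[of _ "prog_comps _"] progressive_prog_comps)

lemma prog_comps_eq_Nil_iff: "prog_comps t = [] \<longleftrightarrow> t = Leaf"
  by (cases t) auto

lemma length_prog_comps_eq_1_iff: "length (prog_comps t) = 1 \<longleftrightarrow> progressive t"
  by (cases t) (auto simp: progressive_def prog_comps_eq_Nil_iff)

lemma Ycomp_1: "Ycomp 1 = {p. progressive p}"
  unfolding Ycomp_eq using length_prog_comps_eq_1_iff by blast

lemma length_prog_comps_take:
  "length (prog_comps (under_list (take j (prog_comps t)))) = min j (length (prog_comps t))"
proof -
  have "\<forall>p\<in>set (take j (prog_comps t)). progressive p"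
    by (meson in_set_takeD progressive_prog_comps)
  then show ?thesis
    by (simp add: prog_comps_under_list)
qed

lemma length_prog_comps_drop:
  "length (prog_comps (under_list (drop j (prog_comps t)))) = length (prog_comps t) - j"
proof -
  have "\<forall>p\<in>set (drop j (prog_comps t)). progressive p"
    by (meson in_set_dropD progressive_prog_comps)
  then show ?thesis
    by (simp add: prog_comps_under_list)
qed

lemma under_decompositions:
  "{(a, b). under a b = t} =
    (\<lambda>j. (under_list (take j (prog_comps t)), under_list (drop j (prog_comps t)))) `
      {..length (prog_comps t)}"
proof (intro set_eqI iffI)
  fix x assume "x \<in> {(a, b). under a b = t}"
  then obtain a b where "x = (a, b)" "prog_comps t = prog_comps a @ prog_comps b"
    by (auto simp: prog_comps_under)
  then show "x \<in> (\<lambda>j. (under_list (take j (prog_comps t)), under_list (drop j (prog_comps t)))) `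
      {..length (prog_comps t)}"
    by (intro image_eqI[of _ _ "length (prog_comps a)"]) auto
next
  fix x assume "x \<in> (\<lambda>j. (under_list (take j (prog_comps t)), under_list (drop j (prog_comps t)))) `
      {..length (prog_comps t)}"
  then show "x \<in> {(a, b). under a b = t}"
    by (auto simp flip: under_list_append)
qed

lemma inj_on_under_decompositions:
  "inj_on (\<lambda>j. (under_list (take j (prog_comps t)), under_list (drop j (prog_comps t))))
    {..length (prog_comps t)}"
  by (rule inj_on_inverseI[of _ "\<lambda>(a, b). length (prog_comps a)"])
    (simp add: length_prog_comps_take)

lemma sum_under_decompositions:
  "(\<Sum>(a, b)\<in>{(a, b). under a b = t}. h a b) =
    (\<Sum>j\<le>length (prog_comps t). h (under_list (take j (prog_comps t))) (under_list (drop j (prog_comps t))))"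
  by (simp add: under_decompositions sum.reindex[OF inj_on_under_decompositions])

lemma M_nonzero_inodes: "M t s \<noteq> 0 \<Longrightarrow> inodes s = inodes t"
  by (metis M_eq_mu mu_eq_0 of_int_0 tamari_le_inodes)

lemma finsupp_M: "finsupp (M t)"
  unfolding finsupp_def
  by (rule finite_subset[OF _ finite_Y[of "inodes t"]]) (auto simp: Y_def dest: M_nonzero_inodes)

lemma sum_M_zeta:
  assumes "x \<in> Y n"
  shows "(\<Sum>z\<in>Y n. M x z * of_bool (tamari_le z y)) = of_bool (x = y)"
proof -
  have "(\<Sum>z\<in>Y n. M x z * of_bool (tamari_le z y)) =
      (\<Sum>z\<in>Y n. if z \<in> tamari_interval x y then of_int (mu x z) else 0)"
    by (intro sum.cong) (auto simp: M_eq_mu mu_eq_0)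
  also have "\<dots> = (\<Sum>z\<in>Y n \<inter> tamari_interval x y. of_int (mu x z))"
    by (rule sum.inter_restrict[OF finite_Y, symmetric])
  also have "Y n \<inter> tamari_interval x y = tamari_interval x y"
    using assms tamari_le_Y_iff by blast
  finally show ?thesis
    by (simp flip: of_int_sum add: sum_mu_left)
qed

lemma sum_zeta_M:
  assumes "y \<in> Y n"
  shows "(\<Sum>z\<in>Y n. of_bool (tamari_le x z) * M z y) = of_bool (x = y)"
proof -
  have "(\<Sum>z\<in>Y n. of_bool (tamari_le x z) * M z y) =
      (\<Sum>z\<in>Y n. if z \<in> tamari_interval x y then of_int (mu z y) else 0)"
    by (intro sum.cong) (auto simp: M_eq_mu mu_eq_0)
  also have "\<dots> = (\<Sum>z\<in>Y n \<inter> tamari_interval x y. of_int (mu z y))"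
    by (rule sum.inter_restrict[OF finite_Y, symmetric])
  also have "Y n \<inter> tamari_interval x y = tamari_interval x y"
    using assms tamari_le_Y_iff by blast
  finally show ?thesis
    by (simp flip: of_int_sum add: sum_mu_right)
qed

text \<open>The coefficient of \<open>M\<^sub>s\<close> in \<open>f\<close>, read off from \<open>F\<^sub>t = \<Sum>\<^sub>t\<^sub>\<le>\<^sub>s M\<^sub>s\<close>.\<close>
definition M_coeff :: "(tree \<Rightarrow> rat) \<Rightarrow> tree \<Rightarrow> rat" where
  "M_coeff f s = (\<Sum>t\<in>Y (inodes s). of_bool (tamari_le t s) * f t)"

lemma M_coeff_lincomb: "M_coeff (\<lambda>x. \<Sum>i\<in>I. c i * h i x) s = (\<Sum>i\<in>I. c i * M_coeff (h i) s)"
proof (cases "finite I")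
  case True
  then show ?thesis
    by (simp add: M_coeff_def sum_distrib_left sum.swap[of _ I] mult_ac)
qed (simp add: M_coeff_def)

lemma M_coeff_M: "M_coeff (M t) s = of_bool (t = s)"
proof (cases "inodes t = inodes s")
  case True
  then have "t \<in> Y (inodes s)"
    by (simp add: Y_def)
  then show ?thesis
    using sum_M_zeta by (simp add: M_coeff_def mult.commute)
next
  case False
  then have "M t z = 0" if "z \<in> Y (inodes s)" for z
    using that M_nonzero_inodes by (fastforce simp: Y_def)
  then show ?thesis
    using False by (auto simp: M_coeff_def intro: sum.neutral)
qed

lemma finite_M_coeff_support:
  assumes "finsupp f"
  shows "finite {s. M_coeff f s \<noteq> 0}"
proof (rule finite_subset)
  show "{s. M_coeff f s \<noteq> 0} \<subseteq> (\<Union>t\<in>{t. f t \<noteq> 0}. Y (inodes t))"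
  proof
    fix s assume "s \<in> {s. M_coeff f s \<noteq> 0}"
    then obtain t where "of_bool (tamari_le t s) * f t \<noteq> 0"
      unfolding M_coeff_def by (auto elim: sum.not_neutral_contains_not_neutral)
    then have "tamari_le t s" "f t \<noteq> 0"
      by auto
    then show "s \<in> (\<Union>t\<in>{t. f t \<noteq> 0}. Y (inodes t))"
      by (auto simp: Y_def tamari_le_inodes)
  qed
  show "finite (\<Union>t\<in>{t. f t \<noteq> 0}. Y (inodes t))"
    using assms finite_Y by (simp add: finsupp_def)
qed

lemma M_expansion:
  assumes "finsupp f"
  shows "f = (\<lambda>u. \<Sum>s\<in>{s. M_coeff f s \<noteq> 0}. M_coeff f s * M s u)"
proof
  fix u
  let ?S = "{s. M_coeff f s \<noteq> 0}" and ?Y = "Y (inodes u)"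
  have "(\<Sum>s\<in>?S. M_coeff f s * M s u) = (\<Sum>s\<in>?S \<inter> ?Y. M_coeff f s * M s u)"
    using finite_M_coeff_support[OF assms]
    by (intro sum.mono_neutral_right) (auto simp: Y_def dest: M_nonzero_inodes)
  also have "\<dots> = (\<Sum>s\<in>?Y. M_coeff f s * M s u)"
    using finite_Y by (intro sum.mono_neutral_left) auto
  also have "\<dots> = (\<Sum>s\<in>?Y. \<Sum>t\<in>?Y. f t * (of_bool (tamari_le t s) * M s u))"
  proof (rule sum.cong[OF refl])
    fix s assume "s \<in> ?Y"
    then have "inodes s = inodes u"
      by (simp add: Y_def)
    then show "M_coeff f s * M s u = (\<Sum>t\<in>?Y. f t * (of_bool (tamari_le t s) * M s u))"
      by (simp add: M_coeff_def sum_distrib_left sum_distrib_right mult_ac)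
  qed
  also have "\<dots> = (\<Sum>t\<in>?Y. f t * (\<Sum>s\<in>?Y. of_bool (tamari_le t s) * M s u))"
    by (subst sum.swap) (simp add: sum_distrib_left)
  also have "\<dots> = (\<Sum>t\<in>?Y. if t = u then f u else 0)"
    using sum_zeta_M[of u "inodes u"] by (intro sum.cong) (auto simp: Y_def)
  also have "\<dots> = f u"
    using finite_Y[of "inodes u"] by (simp add: Y_def)
  finally show "f u = (\<Sum>s\<in>?S. M_coeff f s * M s u)" ..
qed

lemma finsupp_eqI_M_coeff:
  "finsupp f \<Longrightarrow> finsupp g \<Longrightarrow> (\<And>s. M_coeff f s = M_coeff g s) \<Longrightarrow> f = g"
  using M_expansion[of f] M_expansion[of g] by simp

section \<open>The coproduct of the monomial basis\<close>

lemma card_split_at_eq: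
  "card {i. i \<le> inodes s \<and> split_at s i = (p, q)} = of_bool (split_at s (inodes p) = (p, q))"
proof -
  have "i = inodes p" if "i \<le> inodes s" "split_at s i = (p, q)" for i
    using that inodes_fst_split_at[of s i] by simp
  moreover have "inodes p \<le> inodes s" if "split_at s (inodes p) = (p, q)"
    using that inodes_fst_split_at[of s "inodes p"] by simp
  ultimately have "{i. i \<le> inodes s \<and> split_at s i = (p, q)} =
      (if split_at s (inodes p) = (p, q) then {inodes p} else {})"
    by auto
  then show ?thesis
    by simp
qed

lemma coprod_eq_sum_split_at:
  assumes "finite S" "{t. f t \<noteq> 0} \<subseteq> S"
  shows "coprod f (p, q) = (\<Sum>t\<in>S. f t * of_bool (split_at t (inodes p) = (p, q)))"
proof -
  have "coprod f (p, q) = (\<Sum>t\<in>{t. f t \<noteq> 0}. f t * of_bool (split_at t (inodes p) = (p, q)))"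
    by (simp add: coprod_def card_split_at_eq)
  also have "\<dots> = (\<Sum>t\<in>S. f t * of_bool (split_at t (inodes p) = (p, q)))"
    using assms by (intro sum.mono_neutral_left) auto
  finally show ?thesis .
qed

lemma coprod_lincomb:
  assumes "finite A" "\<And>v. v \<in> A \<Longrightarrow> finsupp v"
  shows "coprod (\<lambda>x. \<Sum>v\<in>A. c v * v x) = (\<lambda>pq. \<Sum>v\<in>A. c v * coprod v pq)"
proof (intro ext, clarify)
  fix p q
  define S where "S = (\<Union>v\<in>A. {x. v x \<noteq> 0})"
  have "finite S"
    using assms by (auto simp: S_def finsupp_def)
  have supp: "{x. v x \<noteq> 0} \<subseteq> S" if "v \<in> A" for v
    using that by (auto simp: S_def)
  have "{x. (\<Sum>v\<in>A. c v * v x) \<noteq> 0} \<subseteq> S"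
    by (auto simp: S_def) (metis (mono_tags, lifting) mult_zero_right sum.neutral)
  then have "coprod (\<lambda>x. \<Sum>v\<in>A. c v * v x) (p, q) =
      (\<Sum>t\<in>S. (\<Sum>v\<in>A. c v * v t) * of_bool (split_at t (inodes p) = (p, q)))"
    by (rule coprod_eq_sum_split_at[OF \<open>finite S\<close>])
  also have "\<dots> = (\<Sum>v\<in>A. c v * (\<Sum>t\<in>S. v t * of_bool (split_at t (inodes p) = (p, q))))"
    by (simp add: sum_distrib_left sum_distrib_right sum.swap[of _ S] mult_ac)
  also have "\<dots> = (\<Sum>v\<in>A. c v * coprod v (p, q))"
    using \<open>finite S\<close> supp by (simp add: coprod_eq_sum_split_at)
  finally show "coprod (\<lambda>x. \<Sum>v\<in>A. c v * v x) (p, q) = (\<Sum>v\<in>A. c v * coprod v (p, q))" .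
qed

text \<open>Moebius inversion in both tensor factors, through the Galois connection.\<close>
lemma of_bool_split_at_eq:
  "of_bool (split_at s (inodes p) = (p, q)) =
    (\<Sum>a\<in>Y (inodes p). \<Sum>b\<in>Y (inodes q). of_bool (tamari_le s (under a b)) * (M a p * M b q))"
proof -
  let ?s0 = "fst (split_at s (inodes p))" and ?s1 = "snd (split_at s (inodes p))"
  have "(\<Sum>a\<in>Y (inodes p). \<Sum>b\<in>Y (inodes q). of_bool (tamari_le s (under a b)) * (M a p * M b q)) =
      (\<Sum>a\<in>Y (inodes p). \<Sum>b\<in>Y (inodes q).
        (of_bool (tamari_le ?s0 a) * M a p) * (of_bool (tamari_le ?s1 b) * M b q))"
    by (intro sum.cong refl) (simp add: Y_def tamari_le_under_iff)
  also have "\<dots> = (\<Sum>a\<in>Y (inodes p). of_bool (tamari_le ?s0 a) * M a p) *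
      (\<Sum>b\<in>Y (inodes q). of_bool (tamari_le ?s1 b) * M b q)"
    by (simp add: sum_product)
  also have "\<dots> = of_bool (?s0 = p) * of_bool (?s1 = q)"
    using sum_zeta_M[of p "inodes p"] sum_zeta_M[of q "inodes q"] by (simp add: Y_def)
  finally show ?thesis
    by (simp add: prod_eq_iff)
qed

lemma coprod_M_decompositions:
  "coprod (M t) (p, q) = (\<Sum>(a, b)\<in>{(a, b). under a b = t}. M a p * M b q)"
proof -
  let ?n = "inodes t" and ?P = "Y (inodes p) \<times> Y (inodes q)" and ?D = "{(a, b). under a b = t}"
  have "t \<in> Y ?n"
    by (simp add: Y_def)
  have "{s. M t s \<noteq> 0} \<subseteq> Y ?n"
    by (auto simp: Y_def dest: M_nonzero_inodes)
  then have "coprod (M t) (p, q) = (\<Sum>s\<in>Y ?n. M t s * of_bool (split_at s (inodes p) = (p, q)))"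
    by (rule coprod_eq_sum_split_at[OF finite_Y])
  also have "\<dots> = (\<Sum>s\<in>Y ?n. \<Sum>a\<in>Y (inodes p). \<Sum>b\<in>Y (inodes q).
      (M a p * M b q) * (M t s * of_bool (tamari_le s (under a b))))"
    by (simp add: of_bool_split_at_eq sum_distrib_left mult_ac)
  also have "\<dots> = (\<Sum>a\<in>Y (inodes p). \<Sum>b\<in>Y (inodes q).
      (M a p * M b q) * (\<Sum>s\<in>Y ?n. M t s * of_bool (tamari_le s (under a b))))"
    by (subst sum.swap) (simp add: sum.swap[of _ "Y ?n"] sum_distrib_left)
  also have "\<dots> = (\<Sum>a\<in>Y (inodes p). \<Sum>b\<in>Y (inodes q). (M a p * M b q) * of_bool (t = under a b))"
    by (simp add: sum_M_zeta[OF \<open>t \<in> Y ?n\<close>])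
  also have "\<dots> = (\<Sum>(a, b)\<in>?P. if (a, b) \<in> ?D then M a p * M b q else 0)"
    by (auto simp: sum.cartesian_product intro!: sum.cong)
  also have "\<dots> = (\<Sum>(a, b)\<in>?P \<inter> ?D. M a p * M b q)"
    by (simp add: sum.inter_restrict finite_Y case_prod_unfold)
  also have "\<dots> = (\<Sum>(a, b)\<in>?D. M a p * M b q)"
  proof (intro sum.mono_neutral_left ballI)
    show "finite ?D"
      by (simp add: under_decompositions)
    fix x assume "x \<in> ?D - ?P \<inter> ?D"
    then show "(case x of (a, b) \<Rightarrow> M a p * M b q) = 0"
      using M_nonzero_inodes by (fastforce simp: Y_def)
  qed auto
  finally show ?thesis .
qed

lemma coprod_M:
  "coprod (M t) = (\<lambda>pq. \<Sum>j\<le>length (prog_comps t).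
     tensor (M (under_list (take j (prog_comps t)))) (M (under_list (drop j (prog_comps t)))) pq)"
  by (auto simp: fun_eq_iff tensor_def coprod_M_decompositions sum_under_decompositions)

interpretation fun_module: module "\<lambda>(c :: rat) (f :: 'a \<Rightarrow> rat) x. c * f x"
  by standard (auto simp: fun_eq_iff algebra_simps)

lemma sum_fun_apply: "(\<Sum>i\<in>I. f i) x = (\<Sum>i\<in>I. f i x)"
  by (induction I rule: infinite_finite_induct) auto

lemma lin_span_eq_span: "lin_span S = fun_module.span S"
  by (auto simp: lin_span_def fun_module.span_explicit fun_eq_iff sum_fun_apply)

lemma lin_span_base: "v \<in> S \<Longrightarrow> v \<in> lin_span S"
  by (simp add: lin_span_eq_span fun_module.span_base)

lemma lin_span_lincomb:
  assumes "\<And>i. i \<in> I \<Longrightarrow> h i \<in> lin_span S"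
  shows "(\<lambda>x. \<Sum>i\<in>I. c i * h i x) \<in> lin_span S"
proof -
  have "(\<lambda>x. \<Sum>i\<in>I. c i * h i x) = (\<Sum>i\<in>I. (\<lambda>x. c i * h i x))"
    by (simp add: fun_eq_iff sum_fun_apply)
  then show ?thesis
    using assms by (simp add: lin_span_eq_span fun_module.span_sum fun_module.span_scale)
qed

lemma finsupp_lincomb:
  assumes "finite I" "\<And>i. i \<in> I \<Longrightarrow> finsupp (h i)"
  shows "finsupp (\<lambda>x. \<Sum>i\<in>I. c i * h i x)"
proof -
  have "{x. (\<Sum>i\<in>I. c i * h i x) \<noteq> 0} \<subseteq> (\<Union>i\<in>I. {x. h i x \<noteq> 0})"
    by auto (metis (mono_tags, lifting) mult_zero_right sum.neutral)
  then show ?thesis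
    using assms unfolding finsupp_def by (auto intro: finite_subset)
qed

lemma lin_span_finsupp: "(\<And>v. v \<in> S \<Longrightarrow> finsupp v) \<Longrightarrow> f \<in> lin_span S \<Longrightarrow> finsupp f"
  unfolding lin_span_def using finsupp_lincomb[where h = "\<lambda>v. v"] by blast

lemma M_in_grade: "M t \<in> grade (length (prog_comps t))"
  unfolding grade_def by (rule lin_span_base) (auto simp: Ycomp_eq)

lemma finsupp_grade: "f \<in> grade k \<Longrightarrow> finsupp f"
  unfolding grade_def by (rule lin_span_finsupp) (auto simp: finsupp_M)

lemma M_coeff_grade:
  assumes "f \<in> grade k" "s \<notin> Ycomp k"
  shows "M_coeff f s = 0"
proof -
  obtain A c where A: "A \<subseteq> {M t | t. t \<in> Ycomp k}" "f = (\<lambda>x. \<Sum>v\<in>A. c v * v x)"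
    using assms(1) unfolding grade_def lin_span_def by blast
  have "M_coeff v s = 0" if "v \<in> A" for v
    using that A(1) assms(2) by (auto simp: M_coeff_M)
  then show ?thesis
    by (simp add: A(2) M_coeff_lincomb)
qed

lemma M_coeff_graded_sum:
  assumes "\<And>k. g k \<in> grade k" "finite K" "\<And>k. k \<notin> K \<Longrightarrow> g k = (\<lambda>_. 0)"
  shows "M_coeff (\<lambda>t. \<Sum>k\<in>K. g k t) s = M_coeff (g (length (prog_comps s))) s"
proof -
  let ?k = "length (prog_comps s)"
  have "M_coeff (\<lambda>t. \<Sum>k\<in>K. g k t) s = (\<Sum>k\<in>K. M_coeff (g k) s)"
    using M_coeff_lincomb[of "\<lambda>_. 1" g K] by simp
  also have "\<dots> = (\<Sum>k\<in>K. if k = ?k then M_coeff (g ?k) s else 0)"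
    by (intro sum.cong) (auto simp: Ycomp_eq intro!: M_coeff_grade[OF assms(1)])
  also have "\<dots> = M_coeff (g ?k) s"
    using assms(2,3) M_coeff_lincomb[of _ _ "{}"] by auto
  finally show ?thesis .
qed

definition grade_part :: "(tree \<Rightarrow> rat) \<Rightarrow> nat \<Rightarrow> tree \<Rightarrow> rat" where
  "grade_part f k = (\<lambda>u. \<Sum>s\<in>{s. M_coeff f s \<noteq> 0} \<inter> Ycomp k. M_coeff f s * M s u)"

lemma grade_part_in_grade: "grade_part f k \<in> grade k"
  unfolding grade_part_def grade_def by (rule lin_span_lincomb) (auto intro: lin_span_base)

lemma M_coeff_grade_part:
  assumes "finsupp f"
  shows "M_coeff (grade_part f k) s = of_bool (s \<in> Ycomp k) * M_coeff f s"
  using finite_M_coeff_support[OF assms]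
  by (simp add: grade_part_def M_coeff_lincomb M_coeff_M of_bool_def if_distrib sum.delta' cong: if_cong)

lemma finite_grade_part_support:
  assumes "finsupp f"
  shows "finite {k. grade_part f k \<noteq> (\<lambda>_. 0)}"
proof (rule finite_subset)
  show "{k. grade_part f k \<noteq> (\<lambda>_. 0)} \<subseteq> (\<lambda>s. length (prog_comps s)) ` {s. M_coeff f s \<noteq> 0}"
  proof
    fix k assume "k \<in> {k. grade_part f k \<noteq> (\<lambda>_. 0)}"
    moreover have "grade_part f k = (\<lambda>_. 0)" if "{s. M_coeff f s \<noteq> 0} \<inter> Ycomp k = {}"
      using that by (simp add: grade_part_def)
    ultimately obtain s where "M_coeff f s \<noteq> 0" "s \<in> Ycomp k"
      by blast
    then show "k \<in> (\<lambda>s. length (prog_comps s)) ` {s. M_coeff f s \<noteq> 0}"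
      by (auto simp: Ycomp_eq)
  qed
  show "finite ((\<lambda>s. length (prog_comps s)) ` {s. M_coeff f s \<noteq> 0})"
    using finite_M_coeff_support[OF assms] by simp
qed

lemma grade_decomposition:
  assumes "finsupp f"
  shows "\<exists>!g. (\<forall>k. g k \<in> grade k) \<and> finite {k. g k \<noteq> (\<lambda>_. 0)} \<and>
    f = (\<lambda>t. \<Sum>k\<in>{k. g k \<noteq> (\<lambda>_. 0)}. g k t)"
proof (rule ex1I[of _ "grade_part f"], intro conjI allI)
  let ?K = "{k. grade_part f k \<noteq> (\<lambda>_. 0)}"
  show "finite ?K"
    using assms by (rule finite_grade_part_support)
  show "grade_part f k \<in> grade k" for k
    by (rule grade_part_in_grade)
  show "f = (\<lambda>t. \<Sum>k\<in>?K. grade_part f k t)"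
  proof (rule finsupp_eqI_M_coeff)
    show "finsupp (\<lambda>t. \<Sum>k\<in>?K. grade_part f k t)"
      using finsupp_lincomb[of ?K "grade_part f" "\<lambda>_. 1"] \<open>finite ?K\<close>
        finsupp_grade[OF grade_part_in_grade] by simp
    show "M_coeff f s = M_coeff (\<lambda>t. \<Sum>k\<in>?K. grade_part f k t) s" for s
      using M_coeff_graded_sum[OF grade_part_in_grade \<open>finite ?K\<close>]
      by (simp add: M_coeff_grade_part assms Ycomp_eq)
  qed (fact assms)
next
  fix g assume g: "(\<forall>k. g k \<in> grade k) \<and> finite {k. g k \<noteq> (\<lambda>_. 0)} \<and>
    f = (\<lambda>t. \<Sum>k\<in>{k. g k \<noteq> (\<lambda>_. 0)}. g k t)"
  show "g = grade_part f"
  proof (intro ext[of g] finsupp_eqI_M_coeff)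
    fix k s
    have "M_coeff f s = M_coeff (g (length (prog_comps s))) s"
      using g M_coeff_graded_sum[of g] by auto
    moreover have "M_coeff (g k) s = 0" if "s \<notin> Ycomp k"
      using g that by (blast intro: M_coeff_grade)
    ultimately show "M_coeff (g k) s = M_coeff (grade_part f k) s"
      by (auto simp: M_coeff_grade_part[OF assms] Ycomp_eq)
    show "finsupp (g k)" "finsupp (grade_part f k)"
      using g finsupp_grade grade_part_in_grade by blast+
  qed
qed

lemma coprod_grade:
  assumes "f \<in> grade k"
  shows "coprod f \<in> lin_span (\<Union>i\<le>k. {tensor x y | x y. x \<in> grade i \<and> y \<in> grade (k - i)})"
proof -
  let ?T = "\<Union>i\<le>k. {tensor x y | x y. x \<in> grade i \<and> y \<in> grade (k - i)}"
  obtain A c where A: "finite A" "A \<subseteq> {M t | t. t \<in> Ycomp k}" "f = (\<lambda>x. \<Sum>v\<in>A. c v * v x)"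
    using assms unfolding grade_def lin_span_def by blast
  have "coprod (M t) \<in> lin_span ?T" if "t \<in> Ycomp k" for t
  proof -
    let ?a = "\<lambda>j. M (under_list (take j (prog_comps t)))"
      and ?b = "\<lambda>j. M (under_list (drop j (prog_comps t)))"
    have "tensor (?a j) (?b j) \<in> ?T" if "j \<le> length (prog_comps t)" for j
    proof -
      have "?a j \<in> grade j" "?b j \<in> grade (k - j)"
        using that \<open>t \<in> Ycomp k\<close> M_in_grade[of "under_list (take j (prog_comps t))"]
          M_in_grade[of "under_list (drop j (prog_comps t))"]
        by (auto simp: Ycomp_eq length_prog_comps_take length_prog_comps_drop)
      then show ?thesis
        using that \<open>t \<in> Ycomp k\<close> by (auto simp: Ycomp_eq)
    qed
    then have "(\<lambda>pq. \<Sum>j\<le>length (prog_comps t). 1 * tensor (?a j) (?b j) pq) \<in> lin_span ?T"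
      by (intro lin_span_lincomb lin_span_base) auto
    then show ?thesis
      by (simp add: coprod_M)
  qed
  moreover have "coprod f = (\<lambda>pq. \<Sum>v\<in>A. c v * coprod v pq)"
    unfolding A(3) using A(1,2) finsupp_M by (intro coprod_lincomb) auto
  ultimately show ?thesis
    using A(2) by (auto intro!: lin_span_lincomb)
qed

lemma counit_M: "counit (M t) = of_bool (t = Leaf)"
  using M_nonzero_inodes[of t Leaf] Y_0 by (auto simp: counit_def M_eq_mu Y_def)

lemma counit_grade:
  assumes "f \<in> grade k" "k \<ge> 1"
  shows "counit f = 0"
proof -
  have "counit f = M_coeff f Leaf"
    by (simp add: counit_def M_coeff_def Y_0)
  also have "\<dots> = 0"
    using assms by (intro M_coeff_grade) (auto simp: Ycomp_eq)
  finally show ?thesis .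
qed

section \<open>Cofreeness\<close>

lemma set_subset_Ycomp_1_iff: "set w \<subseteq> Ycomp 1 \<longleftrightarrow> (\<forall>p\<in>set w. progressive p)"
  unfolding Ycomp_1 by blast

lemma under_list_image_progressive:
  "under_list ` {w. (\<forall>p\<in>set w. progressive p) \<and> length w = k} = Ycomp k"
proof -
  have "t \<in> under_list ` {w. (\<forall>p\<in>set w. progressive p) \<and> length w = k}" if "t \<in> Ycomp k" for t
    using that progressive_prog_comps
    by (intro image_eqI[of _ _ "prog_comps t"]) (auto simp: Ycomp_eq)
  then show ?thesis
    by (auto simp: Ycomp_eq prog_comps_under_list)
qed

lemma lin_indep_M_under_list: "lin_indep_on {w. \<forall>p\<in>set w. progressive p} (\<lambda>w. M (under_list w))"
  unfolding lin_indep_on_def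
proof (intro allI impI ballI)
  fix A c w0
  assume "finite A \<and> A \<subseteq> {w. \<forall>p\<in>set w. progressive p} \<and>
      (\<forall>x. (\<Sum>w\<in>A. c w * M (under_list w) x) = 0)"
    and "w0 \<in> A"
  then have "finite A" and prog: "A \<subseteq> {w. \<forall>p\<in>set w. progressive p}"
    and zero: "(\<lambda>x. \<Sum>w\<in>A. c w * M (under_list w) x) = (\<lambda>_. 0)"
    by auto
  have "under_list w = under_list w0 \<longleftrightarrow> w = w0" if "w \<in> A" for w
  proof -
    have "\<forall>p\<in>set w. progressive p" "\<forall>p\<in>set w0. progressive p"
      using that \<open>w0 \<in> A\<close> prog by auto
    then show ?thesis
      by (metis prog_comps_under_list)
  qed
  then have "c w * M_coeff (M (under_list w)) (under_list w0) = (if w = w0 then c w else 0)"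
    if "w \<in> A" for w
    using that by (simp add: M_coeff_M)
  then have "c w0 = M_coeff (\<lambda>x. \<Sum>w\<in>A. c w * M (under_list w) x) (under_list w0)"
    using \<open>finite A\<close> \<open>w0 \<in> A\<close> by (simp add: M_coeff_lincomb)
  also note zero
  finally show "c w0 = 0"
    by (simp add: M_coeff_def)
qed

lemma lin_span_M_under_list: "lin_span ((\<lambda>w. M (under_list w)) ` {w. \<forall>p\<in>set w. progressive p}) = YSym"
proof
  show "lin_span ((\<lambda>w. M (under_list w)) ` {w. \<forall>p\<in>set w. progressive p}) \<subseteq> YSym"
    using lin_span_finsupp[of "(\<lambda>w. M (under_list w)) ` {w. \<forall>p\<in>set w. progressive p}"] finsupp_M
    by (force simp: YSym_def)
next
  show "YSym \<subseteq> lin_span ((\<lambda>w. M (under_list w)) ` {w. \<forall>p\<in>set w. progressive p})"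
  proof
    fix f assume "f \<in> YSym"
    have "M s \<in> (\<lambda>w. M (under_list w)) ` {w. \<forall>p\<in>set w. progressive p}" for s
      using progressive_prog_comps by (intro image_eqI[of _ _ "prog_comps s"]) auto
    then have "(\<lambda>u. \<Sum>s\<in>{s. M_coeff f s \<noteq> 0}. M_coeff f s * M s u) \<in>
        lin_span ((\<lambda>w. M (under_list w)) ` {w. \<forall>p\<in>set w. progressive p})"
      by (intro lin_span_lincomb lin_span_base)
    then show "f \<in> lin_span ((\<lambda>w. M (under_list w)) ` {w. \<forall>p\<in>set w. progressive p})"
      using \<open>f \<in> YSym\<close> by (simp add: YSym_def flip: M_expansion)
  qed
qed

lemma lin_span_M_under_list_length:
  "lin_span ((\<lambda>w. M (under_list w)) ` {w \<in> {w. \<forall>p\<in>set w. progressive p}. length w = k}) = grade k"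
proof -
  have "(\<lambda>w. M (under_list w)) ` {w \<in> {w. \<forall>p\<in>set w. progressive p}. length w = k} = M ` Ycomp k"
    using under_list_image_progressive[of k] by (simp add: image_image flip: image_image[of M under_list])
  then show ?thesis
    by (simp add: grade_def Setcompr_eq_image)
qed

lemma coprod_M_under_list:
  assumes "\<forall>p\<in>set w. progressive p"
  shows "coprod (M (under_list w)) =
    (\<lambda>pq. \<Sum>i\<le>length w. tensor (M (under_list (take i w))) (M (under_list (drop i w))) pq)"
  using assms by (simp add: coprod_M prog_comps_under_list)

lemma counit_M_under_list:
  assumes "\<forall>p\<in>set w. progressive p"
  shows "counit (M (under_list w)) = (if w = [] then 1 else 0)"
proof -
  have "under_list w = Leaf \<longleftrightarrow> w = []"
    using assms prog_comps_under_list by fastforce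
  then show ?thesis
    by (simp add: counit_M)
qed

theorem theorem5p2:
  shows "(\<forall>f\<in>YSym. \<exists>!g::nat \<Rightarrow> tree \<Rightarrow> rat.
            (\<forall>k. g k \<in> grade k) \<and> finite {k. g k \<noteq> (\<lambda>_. 0)} \<and>
            f = (\<lambda>t. \<Sum>k\<in>{k. g k \<noteq> (\<lambda>_. 0)}. g k t))
       \<and> (\<forall>k. coprod ` grade k \<subseteq>
              lin_span (\<Union>i\<le>k. {tensor x y | x y. x \<in> grade i \<and> y \<in> grade (k - i)}))
       \<and> (\<forall>k\<ge>1. \<forall>f\<in>grade k. counit f = 0)
       \<and> (\<exists>\<phi> :: tree list \<Rightarrow> tree \<Rightarrow> rat.
            let W = {w. set w \<subseteq> Ycomp 1} in
              lin_indep_on W \<phi> \<and> lin_span (\<phi> ` W) = YSym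
            \<and> (\<forall>k. lin_span (\<phi> ` {w\<in>W. length w = k}) = grade k)
            \<and> (\<forall>w\<in>W. coprod (\<phi> w) =
                  (\<lambda>p. \<Sum>i\<le>length w. tensor (\<phi> (take i w)) (\<phi> (drop i w)) p))
            \<and> (\<forall>w\<in>W. counit (\<phi> w) = (if w = [] then 1 else 0))
            \<and> (\<forall>t\<in>Ycomp 1. \<phi> [t] = M t))"
  unfolding Let_def set_subset_Ycomp_1_iff
proof (intro conjI ballI allI impI exI[of _ "\<lambda>w. M (under_list w)"] lin_indep_M_under_list
    lin_span_M_under_list lin_span_M_under_list_length coprod_M_under_list counit_M_under_list)
  show "\<exists>!g. (\<forall>k. g k \<in> grade k) \<and> finite {k. g k \<noteq> (\<lambda>_. 0)} \<and>
      f = (\<lambda>t. \<Sum>k\<in>{k. g k \<noteq> (\<lambda>_. 0)}. g k t)" if "f \<in> YSym" for f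
    using that grade_decomposition by (simp add: YSym_def)
qed (auto simp: Ycomp_1 intro: coprod_grade counit_grade)

end
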